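(* Let $0<q<1$ and $w,\nu\in\mathbb{C}$ with $q^{-\nu}\notin q^{\mathbb{Z}_+}$ (i.e. $q^{\nu+k}\ne1$ for all $k\in\mathbb{Z}_+$). Then \[ \mathfrak{F}\!\left(\left\{\frac{w}{q^{-(\nu+k)/2}-q^{(\nu+k)/2}}\right\}_{k=0}^\infty\right)={}_0\phi_1(;q^\nu;q,-q^{\nu+1/2}w^2). \]
   Context: Complex powers of $q$ are $q^s=e^{s\log q}$. $(a;q)_k=\prod_{j=0}^{k-1}(1-aq^j)$ and ${}_0\phi_1(;b;q,z)=\sum_{k=0}^\infty\frac{q^{k(k-1)}}{(q;q)_k(b;q)_k}z^k$. For a complex sequence $x=\{x_k\}_{k=0}^{\infty}$ with $\sum_{k\ge0}|x_kx_{k+1}|<\infty$, \[ \mathfrak{F}(x)=1+\sum_{m=1}^\infty(-1)^m\sum_{k_1=0}^\infty\ \sum_{k_2=k_1+2}^\infty\cdots\sum_{k_m=k_{m-1}+2}^\infty x_{k_1}x_{k_1+1}\cdots x_{k_m}x_{k_m+1}. \] *)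

theory Defs
  imports "HOL-Analysis.Analysis"
begin

definition qpow :: "real \<Rightarrow> complex \<Rightarrow> complex" where
  "qpow q s = exp (s * complex_of_real (ln q))"

definition qpoch :: "complex \<Rightarrow> complex \<Rightarrow> nat \<Rightarrow> complex" where
  "qpoch a q k = (\<Prod>j<k. 1 - a * q ^ j)"

definition phi01 :: "complex \<Rightarrow> real \<Rightarrow> complex \<Rightarrow> complex" where
  "phi01 b q z = (\<Sum>k. complex_of_real (q ^ (k * (k - 1))) /
      (qpoch (of_real q) (of_real q) k * qpoch b (of_real q) k) * z ^ k)"

definition adm_idx :: "nat \<Rightarrow> nat list set" where
  "adm_idx m = {ks. length ks = m \<and> (\<forall>i. Suc i < length ks \<longrightarrow> ks ! i + 2 \<le> ks ! Suc i)}"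

definition frakF :: "(nat \<Rightarrow> complex) \<Rightarrow> complex" where
  "frakF x = 1 + (\<Sum>m. (-1) ^ Suc m *
      infsum (\<lambda>ks. \<Prod>k\<leftarrow>ks. x k * x (Suc k)) (adm_idx (Suc m)))"

end

theory Submission
  imports Defs
begin

text \<open>
  Put b = q^nu and z = w^2 q^(nu+1/2). Then x_k x_(k+1) is the weight
  c_k = z q^k / ((1 - b q^k) (1 - b q^(k+1))), and these weights decay geometrically.
  Let S(m, n) be the sum of c_(k_1) ... c_(k_m) over index lists with k_1 >= n and
  k_(i+1) >= k_i + 2. Splitting off k_1 = n + j gives S(m+1, n) = sum_j c_(n+j) S(m, n+j+2),
  the rearrangement being justified by absolute convergence. This recursion is solved by
  the m-th term of 0phi1(; b q^n; q, q^n z): c_k times the m-th term at n = k + 2 is a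
  constant multiple of u_k - u_(k+1) with u_k = q^(k(m+1)) / (b q^k; q)_(m+1), so the sum
  over j telescopes. At n = 0 the signs in frakF are absorbed by replacing z with -z.
\<close>

definition gapped_lists :: "nat \<Rightarrow> nat \<Rightarrow> nat list set" where
  "gapped_lists m n =
     {ks. length ks = m \<and> sorted_wrt (\<lambda>i j. i + 2 \<le> j) ks \<and> (\<forall>k\<in>set ks. n \<le> k)}"

lemma adm_idx_eq_gapped_lists: "adm_idx m = gapped_lists m 0"
proof -
  have "transp (\<lambda>i j :: nat. i + 2 \<le> j)" by (auto intro: transpI)
  then show ?thesis
    unfolding adm_idx_def gapped_lists_def by (simp add: sorted_wrt_iff_nth_Suc_transp)
qed

lemma gapped_lists_0 [simp]: "gapped_lists 0 n = {[]}"
  by (auto simp: gapped_lists_def)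

lemma gapped_lists_Suc:
  "gapped_lists (Suc m) n = (\<lambda>(j, ks). (n + j) # ks) ` (SIGMA j:UNIV. gapped_lists m (n + j + 2))"
proof (intro set_eqI iffI)
  fix ks assume "ks \<in> gapped_lists (Suc m) n"
  then obtain k ks' where "ks = k # ks'" "n \<le> k" "ks' \<in> gapped_lists m (n + (k - n) + 2)"
    by (cases ks) (auto simp: gapped_lists_def)
  then show "ks \<in> (\<lambda>(j, ks). (n + j) # ks) ` (SIGMA j:UNIV. gapped_lists m (n + j + 2))"
    by (auto intro!: image_eqI[where x = "(k - n, ks')"])
qed (fastforce simp: gapped_lists_def)

lemma gapped_lists_antimono: "n \<le> n' \<Longrightarrow> gapped_lists m n' \<subseteq> gapped_lists m n"
  by (auto simp: gapped_lists_def)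

lemma has_sum_gapped_lists_Suc_iff:
  "(g has_sum s) (gapped_lists (Suc m) n) \<longleftrightarrow>
   ((\<lambda>(j, ks). g ((n + j) # ks)) has_sum s) (SIGMA j:UNIV. gapped_lists m (n + j + 2))"
proof -
  have "inj_on (\<lambda>(j, ks). (n + j) # ks) A" for A :: "(nat \<times> nat list) set"
    by (auto simp: inj_on_def)
  then show ?thesis
    unfolding gapped_lists_Suc by (simp add: has_sum_reindex o_def case_prod_unfold)
qed

lemma summable_on_gapped_lists_Suc_iff:
  "g summable_on gapped_lists (Suc m) n \<longleftrightarrow>
   (\<lambda>(j, ks). g ((n + j) # ks)) summable_on (SIGMA j:UNIV. gapped_lists m (n + j + 2))"
  unfolding summable_on_def has_sum_gapped_lists_Suc_iff ..

lemma abs_summable_on_gapped_lists: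
  fixes c :: "nat \<Rightarrow> 'a :: {real_normed_div_algebra, banach}"
  assumes c: "summable (\<lambda>k. norm (c k))"
  shows "(\<lambda>ks. norm (prod_list (map c ks))) summable_on gapped_lists m n"
proof (induction m arbitrary: n)
  case 0
  show ?case by simp
next
  case (Suc m)
  define N where "N ks = norm (prod_list (map c ks))" for ks
  define C where "C = infsum N (gapped_lists m 0)"
  have tail_le: "infsum N (gapped_lists m k) \<le> C" for k
    unfolding C_def N_def
    by (rule infsum_mono2[OF Suc.IH Suc.IH gapped_lists_antimono]) auto
  have fibre: "(\<lambda>ks. norm (c (n + j) * prod_list (map c ks))) summable_on gapped_lists m (n + j + 2)"
    for j
    using summable_on_cmult_right[OF Suc.IH, of "norm (c (n + j))"] by (simp add: norm_mult)
  have "(\<lambda>j. norm (c (n + j)) * C) summable_on UNIV"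
    using summable_ignore_initial_segment[OF c, of n]
    by (intro summable_nonneg_imp_summable_on summable_mult2)
       (simp_all add: add.commute C_def N_def infsum_nonneg)
  then have outer: "(\<lambda>j. norm (infsum (\<lambda>ks. norm (c (n + j) * prod_list (map c ks)))
                      (gapped_lists m (n + j + 2)))) summable_on UNIV"
    by (rule Infinite_Sum.abs_summable_on_comparison_test')
       (simp add: norm_mult infsum_cmult_right' infsum_nonneg mult_left_mono
          tail_le[unfolded N_def])
  have "(\<lambda>(j, ks). norm (c (n + j) * prod_list (map c ks))) summable_on
          (SIGMA j:UNIV. gapped_lists m (n + j + 2))"
    using fibre outer by (simp add: Infinite_Sum.abs_summable_on_Sigma_iff case_prod_unfold)
  then show ?case
    unfolding summable_on_gapped_lists_Suc_iff by (simp add: case_prod_unfold)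
qed

lemma has_sum_gapped_lists:
  fixes c :: "nat \<Rightarrow> 'a :: {real_normed_div_algebra, banach}"
  assumes c: "summable (\<lambda>k. norm (c k))"
    and G0: "\<And>n. G 0 n = 1"
    and G_Suc: "\<And>m n. (\<lambda>j. c (n + j) * G m (n + j + 2)) sums G (Suc m) n"
  shows "((\<lambda>ks. prod_list (map c ks)) has_sum G m n) (gapped_lists m n)"
proof (induction m arbitrary: n)
  case 0
  show ?case
    using has_sum_finite[of "{[]}" "\<lambda>ks. prod_list (map c ks)"] by (simp add: G0)
next
  case (Suc m)
  define f where "f = (\<lambda>(j, ks). c (n + j) * prod_list (map c ks))"
  define S where "S = (SIGMA j:UNIV. gapped_lists m (n + j + 2))"
  have "(\<lambda>x. norm (f x)) summable_on S"
    using abs_summable_on_gapped_lists[OF c, of "Suc m" n]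
    unfolding summable_on_gapped_lists_Suc_iff f_def S_def by (simp add: case_prod_unfold)
  then have f_has_sum: "(f has_sum infsum f S) S"
    by (rule has_sum_infsum[OF abs_summable_summable])
  have "((\<lambda>j. c (n + j) * G m (n + j + 2)) has_sum infsum f S) UNIV"
    using f_has_sum unfolding S_def
    by (rule has_sum_SigmaD) (simp add: f_def has_sum_cmult_right Suc.IH)
  then have "(\<lambda>j. c (n + j) * G m (n + j + 2)) sums infsum f S"
    by (rule has_sum_imp_sums)
  then have "infsum f S = G (Suc m) n"
    using G_Suc by (rule sums_unique2)
  then show ?case
    using f_has_sum unfolding has_sum_gapped_lists_Suc_iff f_def S_def
    by (simp add: case_prod_unfold)
qed

lemma qpoch_Suc: "qpoch a Q (Suc m) = qpoch a Q m * (1 - a * Q ^ m)"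
  by (simp add: qpoch_def)

lemma qpoch_Suc_shift: "qpoch a Q (Suc m) = (1 - a) * qpoch (a * Q) Q m"
  unfolding qpoch_def by (subst prod.lessThan_Suc_shift) (simp add: mult.assoc)

lemma qpoch_Suc_Suc_shift:
  "qpoch a Q (Suc (Suc m)) = (1 - a) * (1 - a * Q) * qpoch (a * Q ^ 2) Q m"
  unfolding qpoch_Suc_shift power2_eq_square by (simp add: mult.assoc)

lemma qpoch_telescope:
  assumes "qpoch a Q (Suc (Suc m)) \<noteq> 0"
  shows "1 / qpoch a Q (Suc m) - Q ^ Suc m / qpoch (a * Q) Q (Suc m)
         = (1 - Q ^ Suc m) / qpoch a Q (Suc (Suc m))"
proof -
  define P where "P = qpoch (a * Q) Q m"
  define X where "X = Q ^ Suc m"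
  have short: "qpoch a Q (Suc m) = (1 - a) * P" "qpoch (a * Q) Q (Suc m) = P * (1 - a * X)"
    unfolding P_def X_def qpoch_Suc_shift[of a] qpoch_Suc[of "a * Q"] by (simp_all add: mult_ac)
  have long: "qpoch a Q (Suc (Suc m)) = (1 - a) * P * (1 - a * X)"
    unfolding qpoch_Suc_shift[of a] short by (simp add: mult_ac)
  have "1 - a \<noteq> 0" "P \<noteq> 0" "1 - a * X \<noteq> 0"
    using assms unfolding long by auto
  then show ?thesis
    unfolding short long X_def[symmetric] by (simp add: divide_simps) (simp add: algebra_simps)
qed

lemma of_real_power_Suc_neq_1:
  assumes "0 < q" "q < 1"
  shows "complex_of_real q ^ Suc j \<noteq> 1"
proof -
  have "norm (complex_of_real q ^ Suc j) = q ^ Suc j"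
    using assms by (simp add: norm_power del: power_Suc)
  also have "\<dots> < 1"
    using assms by (rule power_Suc_less_one)
  finally show ?thesis by auto
qed

lemma qpoch_of_real_nonzero:
  assumes "0 < q" "q < 1"
  shows "qpoch (of_real q) (of_real q) m \<noteq> 0"
  using of_real_power_Suc_neq_1[OF assms] unfolding qpoch_def by (auto simp: mult.commute)

definition phi01_term :: "complex \<Rightarrow> real \<Rightarrow> complex \<Rightarrow> nat \<Rightarrow> complex" where
  "phi01_term b q z k = complex_of_real (q ^ (k * (k - 1))) /
      (qpoch (of_real q) (of_real q) k * qpoch b (of_real q) k) * z ^ k"

definition pair_weight :: "real \<Rightarrow> complex \<Rightarrow> complex \<Rightarrow> nat \<Rightarrow> complex" where
  "pair_weight q b z k =
     z * of_real q ^ k / ((1 - b * of_real q ^ k) * (1 - b * of_real q ^ Suc k))"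

lemma phi01_eq_suminf: "phi01 b q z = (\<Sum>k. phi01_term b q z k)"
  unfolding phi01_def phi01_term_def ..

lemma phi01_term_0 [simp]: "phi01_term b q z 0 = 1"
  by (simp add: phi01_term_def qpoch_def)

lemma phi01_term_minus: "phi01_term b q (- z) k = (- 1) ^ k * phi01_term b q z k"
proof -
  have "(- z) ^ k = (- 1) ^ k * z ^ k"
    by (simp flip: power_mult_distrib)
  then show ?thesis
    unfolding phi01_term_def by (simp add: mult_ac)
qed

lemma phi01_term_Suc:
  "phi01_term b q z (Suc k)
   = of_real q ^ (2 * k) * z / ((1 - of_real q ^ Suc k) * (1 - b * of_real q ^ k)) * phi01_term b q z k"
proof -
  have exponent: "Suc k * (Suc k - 1) = k * (k - 1) + 2 * k"
    by (cases k) simp_all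
  show ?thesis
    unfolding phi01_term_def exponent qpoch_Suc
    by (simp add: power_add mult_ac)
qed

lemma pair_weight_phi01_numerator:
  fixes Q z :: "'a :: comm_monoid_mult"
  shows "z * Q ^ k * (Q ^ (m * (m - 1)) * (Q ^ (k + 2) * z) ^ m)
         = z ^ Suc m * Q ^ (m * Suc m + k * Suc m)"
proof -
  have exponent: "m * Suc m + k * Suc m = k + m * (m - 1) + (k + 2) * m"
    by (cases m) (simp_all add: algebra_simps)
  have "(Q ^ (k + 2) * z) ^ m = Q ^ ((k + 2) * m) * z ^ m"
    by (simp only: power_mult_distrib power_mult)
  then have "z * Q ^ k * (Q ^ (m * (m - 1)) * (Q ^ (k + 2) * z) ^ m)
      = z ^ Suc m * (Q ^ k * Q ^ (m * (m - 1)) * Q ^ ((k + 2) * m))"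
    by (simp only: power_Suc mult_ac)
  also have "\<dots> = z ^ Suc m * Q ^ (m * Suc m + k * Suc m)"
    by (simp only: exponent power_add)
  finally show ?thesis .
qed

context
  fixes q :: real and b :: complex
  assumes q_pos: "0 < q" and q_less_1: "q < 1"
    and b_avoids: "\<And>j. b * of_real q ^ j \<noteq> 1"
begin

lemma qpoch_shift_nonzero: "qpoch (b * of_real q ^ n) (of_real q) m \<noteq> 0"
  unfolding qpoch_def using b_avoids[of "n + _"] by (auto simp: power_add mult.assoc)

lemma pair_weight_mult_phi01_term:
  "pair_weight q b z k * phi01_term (b * of_real q ^ (k + 2)) q (of_real q ^ (k + 2) * z) m
   = z ^ Suc m * of_real q ^ (m * Suc m) / qpoch (of_real q) (of_real q) (Suc m) *
     (of_real q ^ (k * Suc m) / qpoch (b * of_real q ^ k) (of_real q) (Suc m)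
      - of_real q ^ (Suc k * Suc m) / qpoch (b * of_real q ^ Suc k) (of_real q) (Suc m))"
proof -
  define Q where "Q = complex_of_real q"
  define a where "a = b * Q ^ k"
  have shift: "b * Q ^ Suc k = a * Q" "b * Q ^ (k + 2) = a * Q ^ 2"
    by (simp_all add: a_def power_add power2_eq_square mult_ac)
  note long = qpoch_Suc_Suc_shift[of a Q m]
  have nonzero: "qpoch a Q (Suc (Suc m)) \<noteq> 0" "1 - Q ^ Suc m \<noteq> 0" "qpoch Q Q m \<noteq> 0"
    using qpoch_shift_nonzero[of k "Suc (Suc m)"]
      of_real_power_Suc_neq_1[OF q_pos q_less_1, of m] qpoch_of_real_nonzero[OF q_pos q_less_1]
    by (simp_all add: Q_def a_def)
  have weight: "pair_weight q b z k = z * Q ^ k / ((1 - a) * (1 - a * Q))"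
    unfolding pair_weight_def Q_def[symmetric] shift(1) a_def[symmetric] ..
  have summand: "phi01_term (a * Q ^ 2) q (Q ^ (k + 2) * z) m
      = Q ^ (m * (m - 1)) * (Q ^ (k + 2) * z) ^ m / (qpoch Q Q m * qpoch (a * Q ^ 2) Q m)"
    by (simp add: phi01_term_def Q_def)
  have "pair_weight q b z k * phi01_term (b * Q ^ (k + 2)) q (Q ^ (k + 2) * z) m
        = z * Q ^ k * (Q ^ (m * (m - 1)) * (Q ^ (k + 2) * z) ^ m) /
          (qpoch Q Q m * ((1 - a) * (1 - a * Q) * qpoch (a * Q ^ 2) Q m))"
    unfolding weight shift(2) summand by (simp add: mult_ac)
  also have "\<dots> = z ^ Suc m * Q ^ (m * Suc m) / qpoch Q Q (Suc m) *
                 (Q ^ (k * Suc m) * ((1 - Q ^ Suc m) / qpoch a Q (Suc (Suc m))))"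
  proof -
    have cancel: "Y / (D * (1 - X)) * (C * ((1 - X) / E)) = Y * C / (D * E)"
      if "1 - X \<noteq> 0" "D \<noteq> 0" "E \<noteq> 0" for X Y C D E :: complex
      using that by (simp add: field_simps)
    show ?thesis
      unfolding pair_weight_phi01_numerator long[symmetric] qpoch_Suc[of Q Q m] power_Suc[symmetric]
      by (simp only: cancel[OF nonzero(2) nonzero(3) nonzero(1)] power_add mult.assoc)
  qed
  also have "\<dots> = z ^ Suc m * Q ^ (m * Suc m) / qpoch Q Q (Suc m) *
                 (Q ^ (k * Suc m) / qpoch a Q (Suc m) - Q ^ (Suc k * Suc m) / qpoch (a * Q) Q (Suc m))"
    unfolding qpoch_telescope[OF nonzero(1), symmetric]
    by (simp add: right_diff_distrib power_add mult_ac)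
  finally show ?thesis
    unfolding Q_def a_def by (simp add: mult_ac)
qed

lemma summable_norm_pair_weight: "summable (\<lambda>k. norm (pair_weight q b z k))"
proof -
  have Q_lim: "(\<lambda>k. of_real q ^ k) \<longlonglongrightarrow> (0 :: complex)"
    using q_pos q_less_1 by (intro LIMSEQ_power_zero) simp
  have "(\<lambda>k. z / ((1 - b * of_real q ^ k) * (1 - b * of_real q ^ Suc k)))
               \<longlonglongrightarrow> z / ((1 - b * 0) * (1 - b * 0))"
    by (intro tendsto_intros Q_lim LIMSEQ_Suc[OF Q_lim]) simp_all
  then have "Bseq (\<lambda>k. z / ((1 - b * of_real q ^ k) * (1 - b * of_real q ^ Suc k)))"
    by (rule convergent_imp_Bseq[OF convergentI])
  then obtain M where M: "\<And>k. norm (z / ((1 - b * of_real q ^ k) * (1 - b * of_real q ^ Suc k))) \<le> M"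
    by (auto elim!: BseqE)
  have bound: "norm (pair_weight q b z k) \<le> M * q ^ k" for k
  proof -
    have "norm (pair_weight q b z k)
          = norm (z / ((1 - b * of_real q ^ k) * (1 - b * of_real q ^ Suc k))) * q ^ k"
      unfolding pair_weight_def using q_pos by (simp add: norm_mult norm_divide norm_power del: power_Suc)
    then show ?thesis
      using M[of k] q_pos by (simp add: mult_right_mono)
  qed
  have geometric: "summable (\<lambda>k. M * q ^ k)"
    using q_pos q_less_1 by (intro summable_mult summable_geometric) simp
  show ?thesis
    by (rule summable_comparison_test'[OF geometric, where N = 0]) (simp add: bound)
qed

lemma sums_pair_weight_phi01_term:
  "(\<lambda>j. pair_weight q b z (n + j) *
        phi01_term (b * of_real q ^ (n + j + 2)) q (of_real q ^ (n + j + 2) * z) m)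
   sums phi01_term (b * of_real q ^ n) q (of_real q ^ n * z) (Suc m)"
proof -
  define Q where "Q = complex_of_real q"
  define u where "u k = Q ^ (k * Suc m) / qpoch (b * Q ^ k) Q (Suc m)" for k
  define K where "K = z ^ Suc m * Q ^ (m * Suc m) / qpoch Q Q (Suc m)"
  have Q_lim: "(\<lambda>k. Q ^ k) \<longlonglongrightarrow> 0"
    unfolding Q_def using q_pos q_less_1 by (intro LIMSEQ_power_zero) simp
  have "(\<lambda>k. (Q ^ Suc m) ^ k) \<longlonglongrightarrow> 0"
    unfolding Q_def using q_pos q_less_1
    by (intro LIMSEQ_power_zero) (simp add: norm_power power_Suc_less_one del: power_Suc)
  moreover have "(\<lambda>k. (Q ^ Suc m) ^ k) = (\<lambda>k. Q ^ (k * Suc m))"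
    by (intro ext) (metis power_mult mult.commute)
  ultimately have "(\<lambda>k. Q ^ (k * Suc m)) \<longlonglongrightarrow> 0"
    by simp
  moreover have "(\<lambda>k. qpoch (b * Q ^ k) Q (Suc m)) \<longlonglongrightarrow> (\<Prod>j<Suc m. 1 - b * 0 * Q ^ j)"
    unfolding qpoch_def by (intro tendsto_intros Q_lim)
  ultimately have "u \<longlonglongrightarrow> 0 / 1"
    unfolding u_def by (intro tendsto_divide) simp_all
  then have "(\<lambda>j. u (n + j)) \<longlonglongrightarrow> 0"
    using LIMSEQ_ignore_initial_segment[of u 0 n] by (simp add: add.commute)
  then have "(\<lambda>j. K * (u (n + j) - u (Suc (n + j)))) sums (K * (u n - 0))"
    using telescope_sums'[of "\<lambda>j. u (n + j)" 0] by (intro sums_mult) simp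
  moreover have "K * u n = phi01_term (b * Q ^ n) q (Q ^ n * z) (Suc m)"
    unfolding K_def u_def phi01_term_def Q_def
    by (simp add: power_mult_distrib power_mult[symmetric] mult_ac del: power_Suc)
  ultimately show ?thesis
    unfolding pair_weight_mult_phi01_term K_def u_def Q_def by (simp add: add.commute)
qed

lemma summable_phi01_term: "summable (phi01_term b q z)"
proof -
  define Q where "Q = complex_of_real q"
  define r where "r k = Q ^ (2 * k) * z / ((1 - Q ^ Suc k) * (1 - b * Q ^ k))" for k
  have norm_Q: "norm Q < 1" "norm (Q ^ 2) < 1"
    unfolding Q_def using q_pos q_less_1 by (simp_all add: norm_power abs_square_less_1)
  have Q_lim: "(\<lambda>k. Q ^ k) \<longlonglongrightarrow> 0"
    using norm_Q(1) by (rule LIMSEQ_power_zero)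
  have "r \<longlonglongrightarrow> 0 * z / ((1 - 0) * (1 - b * 0))"
    unfolding r_def power_mult by (intro tendsto_intros Q_lim LIMSEQ_Suc[OF Q_lim] norm_Q) simp_all
  then have "eventually (\<lambda>k. norm (r k) < 1 / 2) sequentially"
    using order_tendstoD(2)[OF tendsto_norm_zero, of r sequentially "1 / 2"] by simp
  then obtain N where N: "\<And>k. k \<ge> N \<Longrightarrow> norm (r k) < 1 / 2"
    by (auto simp: eventually_sequentially)
  show ?thesis
  proof (rule summable_ratio_test[where c = "1 / 2" and N = N])
    fix k assume "k \<ge> N"
    then show "norm (phi01_term b q z (Suc k)) \<le> 1 / 2 * norm (phi01_term b q z k)"
      using N[of k] unfolding phi01_term_Suc r_def[symmetric, unfolded Q_def] norm_mult
      by (intro mult_right_mono) simp_all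
  qed simp
qed

end

lemma qpow_add: "qpow q (s + t) = qpow q s * qpow q t"
  unfolding qpow_def by (simp add: distrib_right exp_add)

lemma qpow_add_of_nat:
  assumes "0 < q"
  shows "qpow q (s + of_nat k) = qpow q s * of_real q ^ k"
proof -
  have "qpow q (of_nat k) = exp (of_real (ln q)) ^ k"
    unfolding qpow_def by (simp add: exp_of_nat_mult)
  also have "\<dots> = of_real q ^ k"
    using assms by (simp add: exp_of_real)
  finally show ?thesis
    by (simp add: qpow_add)
qed

lemma qpow_half_diff:
  "qpow q (- s / 2) - qpow q (s / 2) = (1 - qpow q s) / qpow q (s / 2)"
proof -
  define h where "h = qpow q (s / 2)"
  have "h \<noteq> 0"
    unfolding h_def qpow_def by simp
  moreover have square: "qpow q s = h * h"
    unfolding h_def qpow_add[symmetric] by simp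
  moreover have inverse: "qpow q (- s / 2) = inverse h"
    unfolding h_def qpow_def by (simp add: exp_minus[symmetric])
  ultimately show ?thesis
    unfolding square inverse h_def[symmetric] by (simp add: field_simps)
qed

lemma qpow_quotient_pair_eq_pair_weight:
  fixes q :: real and w \<nu> :: complex
  assumes q: "0 < q"
  defines "x \<equiv> \<lambda>k. w / (qpow q (- (\<nu> + of_nat k) / 2) - qpow q ((\<nu> + of_nat k) / 2))"
  shows "x k * x (Suc k) = pair_weight q (qpow q \<nu>) (w ^ 2 * qpow q (\<nu> + 1 / 2)) k"
proof -
  define h where "h j = qpow q ((\<nu> + of_nat j) / 2)" for j
  have x: "x j = w * h j / (1 - qpow q \<nu> * of_real q ^ j)" for j
    unfolding x_def h_def qpow_half_diff qpow_add_of_nat[OF q, symmetric] by simp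
  have "(\<nu> + of_nat k) / 2 + (\<nu> + of_nat (Suc k)) / 2 = (\<nu> + 1 / 2) + of_nat k"
    by (simp add: field_simps)
  then have "h k * h (Suc k) = qpow q (\<nu> + 1 / 2) * of_real q ^ k"
    unfolding h_def qpow_add[symmetric] qpow_add_of_nat[OF q, symmetric] by simp
  then show ?thesis
    unfolding x pair_weight_def by (simp add: power2_eq_square mult_ac)
qed

theorem mainTheorem6:
  fixes q :: real and w \<nu> :: complex
  assumes "0 < q" and "q < 1"
    and "\<forall>k::nat. qpow q (\<nu> + of_nat k) \<noteq> 1"
  shows "frakF (\<lambda>k. w / (qpow q (- (\<nu> + of_nat k) / 2) - qpow q ((\<nu> + of_nat k) / 2)))
         = phi01 (qpow q \<nu>) q (- qpow q (\<nu> + 1/2) * w ^ 2)"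
proof -
  define x where "x k = w / (qpow q (- (\<nu> + of_nat k) / 2) - qpow q ((\<nu> + of_nat k) / 2))" for k
  define b where "b = qpow q \<nu>"
  define B where "B = w ^ 2 * qpow q (\<nu> + 1 / 2)"
  have b_avoids: "b * of_real q ^ j \<noteq> 1" for j
    using assms(3) unfolding b_def qpow_add_of_nat[OF assms(1)] by blast
  have weights: "(\<lambda>k. x k * x (Suc k)) = pair_weight q b B"
    unfolding x_def b_def B_def using qpow_quotient_pair_eq_pair_weight[OF assms(1)] by blast
  have gapped: "infsum (\<lambda>ks. \<Prod>k\<leftarrow>ks. x k * x (Suc k)) (adm_idx m) = phi01_term b q B m" for m
    using has_sum_gapped_lists[of "pair_weight q b B"
        "\<lambda>m n. phi01_term (b * of_real q ^ n) q (of_real q ^ n * B) m" m 0]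
      summable_norm_pair_weight[OF assms(1,2) b_avoids]
      sums_pair_weight_phi01_term[OF assms(1,2) b_avoids]
    unfolding weights adm_idx_eq_gapped_lists by (auto simp: add.assoc intro: infsumI)
  have "phi01 b q (- B) = 1 + (\<Sum>m. phi01_term b q (- B) (Suc m))"
    using suminf_split_head[OF summable_phi01_term[OF assms(1,2) b_avoids]]
    by (simp add: phi01_eq_suminf)
  also have "\<dots> = frakF x"
    unfolding frakF_def phi01_term_minus gapped ..
  finally show ?thesis
    unfolding x_def b_def B_def by (simp add: mult.commute)
qed

end
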